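(* Assume (A1)–(A2). Let $\eta>0$, $x_t\in\mathcal X$, $y_t:=q(x_t)$, and let $g_t\in\mathbb R^d$ be any vector with $\|g_t\|_2\le\hat G_F$ for some $\hat G_F>0$. Set $\tilde g_t:=J_q(x_t)^{-\top}g_t$ and define $$y_{t+1}=\arg\min_{y\in\mathcal Y}\Big\{\tilde g_t^\top(y-y_t)+\tfrac1\eta D_R(y\|y_t)\Big\},\qquad x_{t+1}=\arg\min_{x\in\mathcal X}\Big\{g_t^\top(x-x_t)+\tfrac1{2\eta}\|x-x_t\|_2^2\Big\}.$$ Then $$\|y_{t+1}-q(x_{t+1})\|_2\le G^5\big(5\hat G_F^2+\hat G_F^3\eta\big)\eta^2.$$
   Context: $\mathcal X,\mathcal Y\subset\mathbb R^d$ are convex compact sets and $q:\mathcal X\to\mathcal Y$ is a smooth bijection with Jacobian $J_q(x)$; $M^{-\top}$ denotes the inverse transpose. Bregman divergence $D_R(x\|y)=R(x)-R(y)-\nabla R(y)^\top(x-y)$. (A1) There is a twice continuously differentiable, strictly convex $R:\mathcal Y\to\mathbb R$ such that $[\nabla^2R(q(x))]^{-1}=J_q(x)J_q(x)^\top$ for all $x\in\mathcal X$. (A2) There is $G>1$ such that: $q$ is $G$-Lipschitz on $\mathcal X$; the first and second derivatives of $q^{-1}$ are bounded by $G$; $R$ is $1$-strongly convex (Euclidean norm) and smooth with first and third derivatives bounded by $G$; for every $z\in\mathcal Y$ the map $w\mapsto D_R(z\|w)$ is $G$-Lipschitz. *)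

theory Defs
  imports "HOL-Analysis.Analysis"
begin

definition strict_convex_on :: "'a::real_vector set \<Rightarrow> ('a \<Rightarrow> real) \<Rightarrow> bool" where
  "strict_convex_on S f \<longleftrightarrow>
     (\<forall>x\<in>S. \<forall>y\<in>S. x \<noteq> y \<longrightarrow> (\<forall>u::real. 0 < u \<and> u < 1 \<longrightarrow>
        f (u *\<^sub>R x + (1 - u) *\<^sub>R y) < u * f x + (1 - u) * f y))"

definition bregman :: "('a::real_inner \<Rightarrow> real) \<Rightarrow> ('a \<Rightarrow> 'a) \<Rightarrow> 'a \<Rightarrow> 'a \<Rightarrow> real" where
  "bregman R gR x y = R x - R y - gR y \<bullet> (x - y)"

definition strongly_convex_1_on :: "'a::real_inner set \<Rightarrow> ('a \<Rightarrow> real) \<Rightarrow> bool" where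
  "strongly_convex_1_on S f \<longleftrightarrow>
     (\<forall>x\<in>S. \<forall>y\<in>S. \<forall>u::real. 0 \<le> u \<and> u \<le> 1 \<longrightarrow>
        f (u *\<^sub>R x + (1 - u) *\<^sub>R y) \<le> u * f x + (1 - u) * f y - u * (1 - u) / 2 * (norm (x - y))\<^sup>2)"

end

theory Submission
  imports Defs
begin

text \<open>
  Let a = G \<eta> GF be the size of one step. By (A1), q is an isometry from the Euclidean
  metric on X to the Hessian metric of R on Y, and the mirror gradient J(x)^-T g pairs with
  increments of y as g pairs with their images under the derivative of q^-1. Hence the
  first-order optimality condition of the mirror step, tested at q(x_{t+1}), is the
  variational inequality of the Euclidean projection defining x_{t+1}, up to linearization
  errors of q^-1 and of the gradient of R, which are quadratic in a. Strong convexity of R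
  turns this into n^2 <= a n^2 + (1 + G + G^2) a^2 n for n = |y_{t+1} - q(x_{t+1})|, and
  the crude bound n <= 2 a then gives n <= 5 G^3 a^2.
\<close>

section \<open>Derivatives within convex sets\<close>

lemma has_derivative_within_convex_tendsto:
  fixes f :: "'a::real_normed_vector \<Rightarrow> real"
  assumes f: "(f has_derivative f') (at a within S)"
    and S: "convex S" "a \<in> S" "b \<in> S"
  shows "((\<lambda>u. (f (a + u *\<^sub>R (b - a)) - f a) / u) \<longlongrightarrow> f' (b - a)) (at_right 0)"
proof -
  define \<gamma> where "\<gamma> = (\<lambda>u::real. a + u *\<^sub>R (b - a))"
  have "\<gamma> ` {0..1} \<subseteq> S"
  proof
    fix z assume "z \<in> \<gamma> ` {0..1}"
    then obtain u where "u \<in> {0..1}" "z = (1 - u) *\<^sub>R a + u *\<^sub>R b"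
      by (auto simp: \<gamma>_def algebra_simps)
    then show "z \<in> S" using S by (auto intro: convexD_alt)
  qed
  then have "(f has_derivative f') (at (\<gamma> 0) within \<gamma> ` {0..1})"
    using has_derivative_subset[OF f] by (simp add: \<gamma>_def)
  moreover have "(\<gamma> has_derivative (\<lambda>u. u *\<^sub>R (b - a))) (at 0 within {0..1})"
    unfolding \<gamma>_def by (auto intro!: derivative_eq_intros)
  ultimately have "((\<lambda>u. f (\<gamma> u)) has_derivative (\<lambda>u. f' (u *\<^sub>R (b - a)))) (at 0 within {0..1})"
    using has_derivative_in_compose by blast
  moreover have "(\<lambda>u. f' (u *\<^sub>R (b - a))) = (*) (f' (b - a))"
    using has_derivative_linear[OF f] by (auto simp: linear_scale)
  ultimately have "((\<lambda>u. f (\<gamma> u)) has_field_derivative f' (b - a)) (at 0 within {0..1})"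
    by (simp add: has_field_derivative_def)
  then show ?thesis
    by (simp add: has_field_derivative_iff at_within_Icc_at_right \<gamma>_def)
qed

lemma has_derivative_within_convex_unique:
  fixes f :: "'a::real_normed_vector \<Rightarrow> 'b::real_inner"
  assumes f1: "(f has_derivative f1) (at a within S)" and f2: "(f has_derivative f2) (at a within S)"
    and S: "convex S" "a \<in> S" "b \<in> S"
  shows "f1 (b - a) = f2 (b - a)"
proof -
  let ?e = "f1 (b - a) - f2 (b - a)"
  have "((\<lambda>x. ?e \<bullet> f x) has_derivative (\<lambda>h. ?e \<bullet> f1 h)) (at a within S)"
    and "((\<lambda>x. ?e \<bullet> f x) has_derivative (\<lambda>h. ?e \<bullet> f2 h)) (at a within S)"
    by (intro derivative_intros f1 f2)+
  then have "?e \<bullet> f1 (b - a) = ?e \<bullet> f2 (b - a)"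
    using has_derivative_within_convex_tendsto[OF _ S] tendsto_unique[OF trivial_limit_at_right_real]
    by blast
  then have "?e \<bullet> ?e = 0" by (simp add: inner_diff_right)
  then show ?thesis by simp
qed

lemma has_derivative_right_inverse_within_convex:
  fixes f :: "'a::real_normed_vector \<Rightarrow> 'b::real_inner"
  assumes T: "convex T" "t \<in> T" "y \<in> T"
    and g_into: "g ` T \<subseteq> S" and f_g: "\<And>z. z \<in> T \<Longrightarrow> f (g z) = z"
    and f: "(f has_derivative f') (at (g t) within S)"
    and g: "(g has_derivative g') (at t within T)"
  shows "f' (g' (y - t)) = y - t"
proof -
  have "((\<lambda>z. f (g z)) has_derivative (\<lambda>h. f' (g' h))) (at t within T)"
    using has_derivative_in_compose[OF g has_derivative_subset[OF f g_into]] .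
  then have "((\<lambda>z. z) has_derivative (\<lambda>h. f' (g' h))) (at t within T)"
    using has_derivative_transform[OF \<open>t \<in> T\<close>, of "\<lambda>z. z" "\<lambda>z. f (g z)"] f_g by simp
  from has_derivative_within_convex_unique[OF this has_derivative_ident T] show ?thesis .
qed

lemma linearization_error_le:
  fixes f :: "'a::real_normed_vector \<Rightarrow> 'b::real_normed_vector"
  assumes S: "convex S" "a \<in> S" "b \<in> S" and L: "0 \<le> L"
    and f: "\<And>x. x \<in> S \<Longrightarrow> (f has_derivative f' x) (at x within S)"
    and f'_lip: "\<And>x h. x \<in> S \<Longrightarrow> norm (f' x h - f' a h) \<le> L * norm (x - a) * norm h"
  shows "norm (f b - f a - f' a (b - a)) \<le> L * (norm (b - a))\<^sup>2"
proof -
  have seg: "closed_segment a b \<subseteq> S" using S by (simp add: closed_segment_subset)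
  have "norm (f b - f a - f' a (b - a)) \<le> norm (b - a) * (L * norm (b - a))"
  proof (rule differentiable_bound_linearization[where S = "closed_segment a b"])
    show "a + t *\<^sub>R (b - a) \<in> closed_segment a b" if "t \<in> {0..1}" for t
      using that by (auto simp: segment_convex_hull convex_hull_2_alt)
    show "(f has_derivative f' x) (at x within closed_segment a b)" if "x \<in> closed_segment a b" for x
      using that seg by (auto intro: has_derivative_subset f)
    show "onorm (f' x - f' a) \<le> L * norm (b - a)" if x: "x \<in> closed_segment a b" for x
    proof (rule onorm_bound)
      show "0 \<le> L * norm (b - a)" using L by simp
    next
      fix h
      have "norm (f' x h - f' a h) \<le> L * norm (x - a) * norm h" using x seg by (auto intro: f'_lip)
      also have "\<dots> \<le> L * norm (b - a) * norm h"
        using segment_bound1[OF x] L by (intro mult_right_mono mult_left_mono) auto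
      finally show "norm ((f' x - f' a) h) \<le> L * norm (b - a) * norm h" by simp
    qed
  qed simp
  then show ?thesis by (simp add: power2_eq_square mult_ac)
qed

section \<open>Strong convexity and the two update steps\<close>

lemma strongly_convex_1_on_add_linear:
  assumes "strongly_convex_1_on S f"
  shows "strongly_convex_1_on S (\<lambda>x. f x + v \<bullet> x)"
  using assms unfolding strongly_convex_1_on_def
  by (auto simp: inner_add_right algebra_simps)

lemma strongly_convex_1_on_minimum_growth:
  assumes f: "strongly_convex_1_on S f" and S: "convex S" "m \<in> S" "y \<in> S"
    and min: "\<And>z. z \<in> S \<Longrightarrow> f m \<le> f z"
  shows "f m + (norm (y - m))\<^sup>2 / 2 \<le> f y"
proof -
  have "(1 - u) * ((norm (y - m))\<^sup>2 / 2) \<le> f y - f m" if u: "0 < u" "u < 1" for u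
  proof -
    have "f m \<le> f (u *\<^sub>R y + (1 - u) *\<^sub>R m)"
      using u S by (intro min convexD) auto
    also have "\<dots> \<le> u * f y + (1 - u) * f m - u * (1 - u) / 2 * (norm (y - m))\<^sup>2"
      using f u S unfolding strongly_convex_1_on_def by auto
    finally have "u * ((1 - u) * ((norm (y - m))\<^sup>2 / 2)) \<le> u * (f y - f m)"
      by (simp add: algebra_simps)
    then show ?thesis using u by simp
  qed
  then have "eventually (\<lambda>u. (1 - u) * ((norm (y - m))\<^sup>2 / 2) \<le> f y - f m) (at_right 0)"
    unfolding eventually_at_right_field by (intro exI[of _ 1]) auto
  moreover have "((\<lambda>u. (1 - u) * ((norm (y - m))\<^sup>2 / 2)) \<longlongrightarrow> (norm (y - m))\<^sup>2 / 2) (at_right 0)"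
    by (auto intro!: tendsto_eq_intros)
  ultimately show ?thesis
    using tendsto_upperbound[OF _ _ trivial_limit_at_right_real] by fastforce
qed

lemma strongly_convex_1_on_gradient_growth:
  assumes f: "strongly_convex_1_on S f" and S: "convex S" "x \<in> S" "y \<in> S"
    and f': "(f has_derivative f') (at x within S)"
  shows "f x + f' (y - x) + (norm (y - x))\<^sup>2 / 2 \<le> f y"
proof -
  let ?c = "f y - f x - (norm (y - x))\<^sup>2 / 2"
  have "(f (x + u *\<^sub>R (y - x)) - f x) / u \<le> ?c + u * ((norm (y - x))\<^sup>2 / 2)"
    if u: "0 < u" "u < 1" for u
  proof -
    have "f (x + u *\<^sub>R (y - x)) = f (u *\<^sub>R y + (1 - u) *\<^sub>R x)"
      by (simp add: algebra_simps)
    also have "\<dots> \<le> u * f y + (1 - u) * f x - u * (1 - u) / 2 * (norm (y - x))\<^sup>2"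
      using f u S unfolding strongly_convex_1_on_def by auto
    moreover have "u * (?c + u * ((norm (y - x))\<^sup>2 / 2))
        = u * f y + (1 - u) * f x - u * (1 - u) / 2 * (norm (y - x))\<^sup>2 - f x"
      by (simp add: field_simps)
    ultimately have "f (x + u *\<^sub>R (y - x)) - f x \<le> u * (?c + u * ((norm (y - x))\<^sup>2 / 2))"
      by linarith
    then show ?thesis using u by (simp add: divide_le_eq mult.commute)
  qed
  then have "eventually (\<lambda>u. (f (x + u *\<^sub>R (y - x)) - f x) / u \<le> ?c + u * ((norm (y - x))\<^sup>2 / 2))
      (at_right 0)"
    unfolding eventually_at_right_field by (intro exI[of _ 1]) auto
  moreover have "((\<lambda>u. ?c + u * ((norm (y - x))\<^sup>2 / 2)) \<longlongrightarrow> ?c) (at_right 0)"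
    by (auto intro!: tendsto_eq_intros)
  ultimately have "f' (y - x) \<le> ?c"
    using tendsto_le[OF trivial_limit_at_right_real _ has_derivative_within_convex_tendsto[OF f' S]]
    by blast
  then show ?thesis by simp
qed

lemma bregman_proximal_step_le:
  fixes R :: "'a::real_inner \<Rightarrow> real"
  assumes Y: "convex Y" and R: "strongly_convex_1_on Y R"
    and gR: "\<And>y. y \<in> Y \<Longrightarrow> (R has_derivative (\<lambda>h. gR y \<bullet> h)) (at y within Y)"
    and \<eta>: "\<eta> > 0" and y1: "y1 \<in> Y"
    and y1_min: "\<And>y. y \<in> Y \<Longrightarrow>
        c \<bullet> (y1 - yt) + (1 / \<eta>) * bregman R gR y1 yt \<le> c \<bullet> (y - yt) + (1 / \<eta>) * bregman R gR y yt"
    and y: "y \<in> Y"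
  shows "(norm (y1 - y))\<^sup>2 \<le> (\<eta> *\<^sub>R c + gR y - gR yt) \<bullet> (y - y1)"
proof -
  define v where "v = \<eta> *\<^sub>R c - gR yt"
  have v_min: "R y1 + v \<bullet> y1 \<le> R z + v \<bullet> z" if z: "z \<in> Y" for z
  proof -
    have "\<eta> * (c \<bullet> (y1 - yt)) + bregman R gR y1 yt \<le> \<eta> * (c \<bullet> (z - yt)) + bregman R gR z yt"
      using mult_left_mono[OF y1_min[OF z], of \<eta>] \<eta> by (simp add: distrib_left)
    then show ?thesis by (simp add: v_def bregman_def inner_diff_right inner_diff_left algebra_simps)
  qed
  have "R y1 + v \<bullet> y1 + (norm (y - y1))\<^sup>2 / 2 \<le> R y + v \<bullet> y"
    using strongly_convex_1_on_minimum_growth[OF strongly_convex_1_on_add_linear[OF R] Y y1 y v_min] .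
  moreover have "R y + gR y \<bullet> (y1 - y) + (norm (y1 - y))\<^sup>2 / 2 \<le> R y1"
    using strongly_convex_1_on_gradient_growth[OF R Y y y1 gR[OF y]] .
  ultimately show ?thesis
    by (simp add: v_def norm_minus_commute inner_diff_right inner_diff_left inner_add_left)
qed

lemma projected_gradient_step:
  fixes S :: "'a::euclidean_space set"
  assumes S: "convex S" "closed S" and z: "z \<in> S" and p: "p \<in> S" and \<eta>: "\<eta> > 0"
    and p_min: "\<And>x. x \<in> S \<Longrightarrow>
        g \<bullet> (p - z) + (1 / (2 * \<eta>)) * (norm (p - z))\<^sup>2 \<le> g \<bullet> (x - z) + (1 / (2 * \<eta>)) * (norm (x - z))\<^sup>2"
  shows "\<And>x. x \<in> S \<Longrightarrow> 0 \<le> (\<eta> *\<^sub>R g + (p - z)) \<bullet> (x - p)"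
    and "norm (\<eta> *\<^sub>R g + (p - z)) \<le> norm (\<eta> *\<^sub>R g)"
    and "norm (p - z) \<le> norm (\<eta> *\<^sub>R g)"
proof -
  have dist_sq: "(dist (z - \<eta> *\<^sub>R g) w)\<^sup>2
      = 2 * \<eta> * (g \<bullet> (w - z) + (1 / (2 * \<eta>)) * (norm (w - z))\<^sup>2) + (norm (\<eta> *\<^sub>R g))\<^sup>2" for w
  proof -
    have "dist (z - \<eta> *\<^sub>R g) w = norm ((w - z) + \<eta> *\<^sub>R g)"
      by (simp add: dist_norm norm_minus_commute algebra_simps)
    moreover have "(norm ((w - z) + \<eta> *\<^sub>R g))\<^sup>2
        = (norm (w - z))\<^sup>2 + 2 * ((w - z) \<bullet> (\<eta> *\<^sub>R g)) + (norm (\<eta> *\<^sub>R g))\<^sup>2"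
      by (simp add: power2_norm_eq_inner inner_add_left inner_add_right inner_commute del: norm_scaleR)
    ultimately show ?thesis
      using \<eta> by (simp add: inner_commute field_simps)
  qed
  have closest: "\<forall>x\<in>S. dist (z - \<eta> *\<^sub>R g) p \<le> dist (z - \<eta> *\<^sub>R g) x"
  proof
    fix x assume "x \<in> S"
    then have "(dist (z - \<eta> *\<^sub>R g) p)\<^sup>2 \<le> (dist (z - \<eta> *\<^sub>R g) x)\<^sup>2"
      using p_min \<eta> unfolding dist_sq by simp
    then show "dist (z - \<eta> *\<^sub>R g) p \<le> dist (z - \<eta> *\<^sub>R g) x"
      by (rule power2_le_imp_le) simp
  qed
  show "0 \<le> (\<eta> *\<^sub>R g + (p - z)) \<bullet> (x - p)" if "x \<in> S" for x
    using any_closest_point_dot[OF S p that closest] by (simp add: inner_diff_left inner_add_left)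
  show "norm (\<eta> *\<^sub>R g + (p - z)) \<le> norm (\<eta> *\<^sub>R g)"
    using closest z by (auto simp: dist_norm norm_minus_commute algebra_simps)
  have "p = closest_point S (z - \<eta> *\<^sub>R g)"
    using closest_point_unique[OF S p closest] .
  then show "norm (p - z) \<le> norm (\<eta> *\<^sub>R g)"
    using closest_point_lipschitz[OF S, of "z - \<eta> *\<^sub>R g" z] closest_point_self[OF z] z
    by (auto simp: dist_norm)
qed

section \<open>The reparametrization\<close>

lemma matrix_mul_matrix_inv:
  fixes A :: "'a::semiring_1^'n^'m"
  assumes "invertible A"
  shows "A ** matrix_inv A = mat 1"
  using someI_ex[OF assms[unfolded invertible_def]] unfolding matrix_inv_def by auto

lemma transpose_mul_mul_eq_mat_1:
  fixes H M :: "real^'n^'n"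
  assumes "invertible H" and "matrix_inv H = M ** transpose M"
  shows "transpose M ** H ** M = mat 1"
proof -
  have "(H ** M) ** transpose M = mat 1"
    using matrix_mul_matrix_inv[OF assms(1)] assms(2) by (simp add: matrix_mul_assoc)
  then show ?thesis
    using matrix_left_right_inverse by (metis matrix_mul_assoc)
qed

lemma matrix_vector_mult_inner: "((A::real^'n^'m) *v x) \<bullet> y = x \<bullet> (transpose A *v y)"
  by (metis dot_lmul_matrix inner_commute transpose_matrix_vector)

lemma bounded_linear_matrix_vector_mult_left: "bounded_linear (\<lambda>A::real^'n^'m. A *v h)"
proof -
  have "linear (\<lambda>A::real^'n^'m. A *v h)"
    by (rule linearI)
      (simp_all add: vec_eq_iff matrix_vector_mult_def sum_distrib_left sum.distrib algebra_simps)
  then show ?thesis using linear_conv_bounded_linear by blast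
qed

locale hessian_reparametrization =
  fixes X Y :: "(real^'n) set"
    and q :: "real^'n \<Rightarrow> real^'n"
    and J Jinv HR :: "real^'n \<Rightarrow> real^'n^'n"
    and D2inv TR :: "real^'n \<Rightarrow> real^'n \<Rightarrow> real^'n^'n"
    and gR :: "real^'n \<Rightarrow> real^'n"
    and G :: real
  assumes convex_Y: "convex Y"
    and q_bij: "bij_betw q X Y"
    and q_deriv: "\<And>x. x \<in> X \<Longrightarrow> (q has_derivative (\<lambda>h. J x *v h)) (at x within X)"
    and HR_inverse: "\<And>x. x \<in> X \<Longrightarrow>
        invertible (HR (q x)) \<and> matrix_inv (HR (q x)) = J x ** transpose (J x)"
    and G_nonneg: "0 \<le> G"
    and qinv_deriv: "\<And>y. y \<in> Y \<Longrightarrow> (inv_into X q has_derivative (\<lambda>h. Jinv y *v h)) (at y within Y)"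
    and Jinv_bound: "\<And>y h. y \<in> Y \<Longrightarrow> norm (Jinv y *v h) \<le> G * norm h"
    and Jinv_deriv: "\<And>y. y \<in> Y \<Longrightarrow> (Jinv has_derivative D2inv y) (at y within Y)"
    and D2inv_bound: "\<And>y h k. y \<in> Y \<Longrightarrow> norm (D2inv y h *v k) \<le> G * norm h * norm k"
    and gR_deriv: "\<And>y. y \<in> Y \<Longrightarrow> (gR has_derivative (\<lambda>h. HR y *v h)) (at y within Y)"
    and HR_deriv: "\<And>y. y \<in> Y \<Longrightarrow> (HR has_derivative TR y) (at y within Y)"
    and TR_bound: "\<And>y h k l. y \<in> Y \<Longrightarrow> \<bar>(TR y h *v k) \<bullet> l\<bar> \<le> G * norm h * norm k * norm l"
begin

abbreviation qinv :: "real^'n \<Rightarrow> real^'n" where "qinv \<equiv> inv_into X q"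

lemma q_in: "x \<in> X \<Longrightarrow> q x \<in> Y"
  using q_bij bij_betwE by blast

lemma qinv_in: "y \<in> Y \<Longrightarrow> qinv y \<in> X"
  using q_bij by (metis bij_betw_imp_surj_on inv_into_into)

lemma qinv_q [simp]: "x \<in> X \<Longrightarrow> qinv (q x) = x"
  using q_bij by (simp add: bij_betw_inv_into_left)

lemma q_qinv [simp]: "y \<in> Y \<Longrightarrow> q (qinv y) = y"
  using q_bij by (simp add: bij_betw_inv_into_right)

lemma J_Jinv_tangent:
  assumes x: "x \<in> X" and y: "y \<in> Y"
  shows "J x *v (Jinv (q x) *v (y - q x)) = y - q x"
proof -
  have "(q has_derivative (\<lambda>h. J x *v h)) (at (qinv (q x)) within X)"
    using q_deriv[OF x] x by simp
  from has_derivative_right_inverse_within_convex[OF convex_Y q_in[OF x] y _ _ this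
      qinv_deriv[OF q_in[OF x]]]
  show ?thesis using qinv_in by auto
qed

lemma transpose_J_HR_J: "x \<in> X \<Longrightarrow> transpose (J x) ** HR (q x) ** J x = mat 1"
  using HR_inverse transpose_mul_mul_eq_mat_1 by blast

lemma inv_transpose_J_inner:
  assumes x: "x \<in> X" and y: "y \<in> Y"
  shows "(matrix_inv (transpose (J x)) *v g) \<bullet> (y - q x) = g \<bullet> (Jinv (q x) *v (y - q x))"
proof -
  have "invertible (transpose (J x))"
    using transpose_J_HR_J[OF x] invertible_right_inverse by (metis matrix_mul_assoc)
  then have "transpose (J x) *v (matrix_inv (transpose (J x)) *v g) = g"
    by (simp add: matrix_vector_mul_assoc matrix_mul_matrix_inv)
  then show ?thesis
    using J_Jinv_tangent[OF x y] matrix_vector_mult_inner inner_commute by metis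
qed

lemma HR_inner_eq_Jinv_inner:
  assumes x: "x \<in> X" and y: "y \<in> Y" and y': "y' \<in> Y"
  shows "(HR (q x) *v (y - q x)) \<bullet> (y' - q x)
       = (Jinv (q x) *v (y - q x)) \<bullet> (Jinv (q x) *v (y' - q x))"
proof -
  define u v where "u = Jinv (q x) *v (y - q x)" and "v = Jinv (q x) *v (y' - q x)"
  have "(HR (q x) *v (y - q x)) \<bullet> (y' - q x) = (HR (q x) *v (J x *v u)) \<bullet> (J x *v v)"
    using J_Jinv_tangent[OF x y] J_Jinv_tangent[OF x y'] by (simp add: u_def v_def)
  also have "\<dots> = (transpose (J x) ** HR (q x) ** J x *v u) \<bullet> v"
    by (simp add: matrix_vector_mult_inner inner_commute matrix_vector_mul_assoc matrix_mul_assoc)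
  also have "\<dots> = u \<bullet> v"
    using transpose_J_HR_J[OF x] by simp
  finally show ?thesis
    by (simp add: u_def v_def)
qed

lemma Jinv_lipschitz:
  assumes "z \<in> Y" "w \<in> Y"
  shows "norm (Jinv z *v h - Jinv w *v h) \<le> G * norm (z - w) * norm h"
proof -
  have "norm (Jinv z *v h - Jinv w *v h) \<le> G * norm h * norm (z - w)"
  proof (rule differentiable_bound[OF convex_Y _ _ assms])
    show "((\<lambda>y. Jinv y *v h) has_derivative (\<lambda>k. D2inv y k *v h)) (at y within Y)" if "y \<in> Y" for y
      using bounded_linear.has_derivative[OF bounded_linear_matrix_vector_mult_left Jinv_deriv[OF that]] .
    show "onorm (\<lambda>k. D2inv y k *v h) \<le> G * norm h" if "y \<in> Y" for y
      using D2inv_bound[OF that] G_nonneg by (intro onorm_bound) (auto simp: mult_ac)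
  qed
  then show ?thesis by (simp add: mult_ac)
qed

lemma HR_lipschitz:
  assumes "z \<in> Y" "w \<in> Y"
  shows "\<bar>(HR z *v h) \<bullet> l - (HR w *v h) \<bullet> l\<bar> \<le> G * norm (z - w) * norm h * norm l"
proof -
  have "norm ((HR z *v h) \<bullet> l - (HR w *v h) \<bullet> l) \<le> G * norm h * norm l * norm (z - w)"
  proof (rule differentiable_bound[OF convex_Y _ _ assms])
    show "((\<lambda>y. (HR y *v h) \<bullet> l) has_derivative (\<lambda>k. (TR y k *v h) \<bullet> l)) (at y within Y)"
      if "y \<in> Y" for y
      using bounded_linear.has_derivative[OF bounded_linear_compose[OF
          bounded_linear_inner_left bounded_linear_matrix_vector_mult_left] HR_deriv[OF that]] .
    show "onorm (\<lambda>k. (TR y k *v h) \<bullet> l) \<le> G * norm h * norm l" if "y \<in> Y" for y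
      using TR_bound[OF that] G_nonneg by (intro onorm_bound) (auto simp: mult_ac)
  qed
  then show ?thesis by (simp add: mult_ac)
qed

definition qinv_remainder :: "real^'n \<Rightarrow> real^'n \<Rightarrow> real^'n" where
  "qinv_remainder z y = qinv y - qinv z - Jinv z *v (y - z)"

definition gR_remainder :: "real^'n \<Rightarrow> real^'n \<Rightarrow> real^'n" where
  "gR_remainder z y = gR y - gR z - HR z *v (y - z)"

lemma qinv_remainder_le:
  assumes "z \<in> Y" "y \<in> Y"
  shows "norm (qinv_remainder z y) \<le> G * (norm (y - z))\<^sup>2"
  unfolding qinv_remainder_def
  using linearization_error_le[OF convex_Y assms G_nonneg qinv_deriv] Jinv_lipschitz assms by blast

lemma gR_remainder_inner_le:
  assumes "z \<in> Y" "y \<in> Y"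
  shows "\<bar>gR_remainder z y \<bullet> l\<bar> \<le> G * norm l * (norm (y - z))\<^sup>2"
proof -
  have "norm (gR y \<bullet> l - gR z \<bullet> l - (HR z *v (y - z)) \<bullet> l) \<le> G * norm l * (norm (y - z))\<^sup>2"
  proof (rule linearization_error_le[OF convex_Y assms, where f' = "\<lambda>y h. (HR y *v h) \<bullet> l"])
    show "((\<lambda>y. gR y \<bullet> l) has_derivative (\<lambda>h. (HR y *v h) \<bullet> l)) (at y within Y)" if "y \<in> Y" for y
      using bounded_linear.has_derivative[OF bounded_linear_inner_left gR_deriv[OF that]] .
    show "norm ((HR x *v h) \<bullet> l - (HR z *v h) \<bullet> l) \<le> G * norm l * norm (x - z) * norm h"
      if "x \<in> Y" for x h
      using HR_lipschitz[OF that assms(1)] by (simp add: mult_ac)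
  qed (use G_nonneg in simp)
  then show ?thesis by (simp add: gR_remainder_def inner_diff_left)
qed

lemma mirror_step_norm_le:
  assumes x: "x \<in> X" and y1: "y1 \<in> Y"
    and step: "(norm (y1 - q x))\<^sup>2 \<le> (\<eta> *\<^sub>R (matrix_inv (transpose (J x)) *v g)) \<bullet> (q x - y1)"
  shows "norm (y1 - q x) \<le> G * norm (\<eta> *\<^sub>R g)"
proof -
  have "(matrix_inv (transpose (J x)) *v g) \<bullet> (q x - y1) = - (g \<bullet> (Jinv (q x) *v (y1 - q x)))"
    using inv_transpose_J_inner[OF x y1, of g] by (metis minus_diff_eq inner_minus_right)
  then have "(norm (y1 - q x))\<^sup>2 \<le> - ((\<eta> *\<^sub>R g) \<bullet> (Jinv (q x) *v (y1 - q x)))"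
    using step by simp
  also have "\<dots> \<le> norm (\<eta> *\<^sub>R g) * norm (Jinv (q x) *v (y1 - q x))"
    using norm_cauchy_schwarz[of "- (\<eta> *\<^sub>R g)"] by simp
  also have "\<dots> \<le> norm (\<eta> *\<^sub>R g) * (G * norm (y1 - q x))"
    using Jinv_bound[OF q_in[OF x]] by (rule mult_left_mono) simp
  finally have "norm (y1 - q x) * norm (y1 - q x) \<le> norm (y1 - q x) * (G * norm (\<eta> *\<^sub>R g))"
    by (simp add: power2_eq_square mult_ac)
  then show ?thesis
    using G_nonneg by (cases "y1 = q x") (auto simp: mult_le_cancel_left_pos)
qed

text \<open>The first-order terms of the optimality defect of the mirror step at q x' cancel against
  the variational inequality of the projected step; only linearization errors remain.\<close>

lemma stationarity_defect_decomposition: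
  assumes x: "x \<in> X" and x': "x' \<in> X" and y1: "y1 \<in> Y"
    and opt: "\<And>z. z \<in> X \<Longrightarrow> 0 \<le> (\<eta> *\<^sub>R g + (x' - x)) \<bullet> (z - x')"
  defines "d \<equiv> y1 - q x'"
  shows "(\<eta> *\<^sub>R (matrix_inv (transpose (J x)) *v g) + gR (q x') - gR (q x)) \<bullet> (q x' - y1)
      \<le> (\<eta> *\<^sub>R g) \<bullet> (Jinv (q x') *v d - Jinv (q x) *v d)
        + (\<eta> *\<^sub>R g + (x' - x)) \<bullet> qinv_remainder (q x') y1
        - qinv_remainder (q x') (q x) \<bullet> (Jinv (q x') *v d) + gR_remainder (q x') (q x) \<bullet> d"
proof -
  define y yh P w r r' s where "y = q x" and "yh = q x'" and "P = Jinv (q x')"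
    and "w = \<eta> *\<^sub>R g + (x' - x)" and "r = qinv_remainder yh y1" and "r' = qinv_remainder yh y"
    and "s = gR_remainder yh y \<bullet> d"
  have y: "y \<in> Y" and yh: "yh \<in> Y" using x x' by (simp_all add: y_def yh_def q_in)
  have pull: "(matrix_inv (transpose (J x)) *v g) \<bullet> d = g \<bullet> (Jinv y *v d)"
    using inv_transpose_J_inner[OF x y1, of g] inv_transpose_J_inner[OF x yh, of g]
    by (simp add: d_def y_def yh_def inner_diff_right matrix_vector_mult_diff_distrib)
  have hess: "(HR yh *v (y - yh)) \<bullet> d = (x - x' - r') \<bullet> (P *v d)"
    using HR_inner_eq_Jinv_inner[OF x' y y1] x x'
    by (simp add: r'_def qinv_remainder_def P_def d_def y_def yh_def)
  have "yh - y1 = - d" by (simp add: d_def yh_def)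
  then have "(\<eta> *\<^sub>R (matrix_inv (transpose (J x)) *v g) + gR yh - gR y) \<bullet> (yh - y1)
      = - (\<eta> * ((matrix_inv (transpose (J x)) *v g) \<bullet> d)) + (HR yh *v (y - yh)) \<bullet> d + s"
    by (simp add: s_def gR_remainder_def inner_diff_left inner_add_left)
  also have "\<dots> = (\<eta> *\<^sub>R g) \<bullet> (P *v d - Jinv y *v d) - w \<bullet> (P *v d) - r' \<bullet> (P *v d) + s"
    unfolding pull hess by (simp add: w_def inner_diff_left inner_add_left inner_diff_right)
  also have "\<dots> \<le> (\<eta> *\<^sub>R g) \<bullet> (P *v d - Jinv y *v d) + w \<bullet> r - r' \<bullet> (P *v d) + s"
    using opt[OF qinv_in[OF y1]] x'
    by (simp add: w_def r_def qinv_remainder_def P_def d_def yh_def inner_diff_right)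
  finally show ?thesis by (simp add: y_def yh_def P_def w_def r_def r'_def s_def)
qed

lemma stationarity_defect_le:
  assumes x: "x \<in> X" and x': "x' \<in> X" and y1: "y1 \<in> Y"
    and opt: "\<And>z. z \<in> X \<Longrightarrow> 0 \<le> (\<eta> *\<^sub>R g + (x' - x)) \<bullet> (z - x')"
    and w_le: "G * norm (\<eta> *\<^sub>R g + (x' - x)) \<le> a" and g_le: "G * norm (\<eta> *\<^sub>R g) \<le> a"
    and e_le: "norm (q x - q x') \<le> a"
  shows "(\<eta> *\<^sub>R (matrix_inv (transpose (J x)) *v g) + gR (q x') - gR (q x)) \<bullet> (q x' - y1)
      \<le> a * (norm (y1 - q x'))\<^sup>2 + (1 + G + G\<^sup>2) * a\<^sup>2 * norm (y1 - q x')"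
proof -
  define y yh P d n e w where "y = q x" and "yh = q x'" and "P = Jinv yh" and "d = y1 - yh"
    and "n = norm d" and "e = norm (y - yh)" and "w = \<eta> *\<^sub>R g + (x' - x)"
  have y: "y \<in> Y" and yh: "yh \<in> Y" using x x' by (simp_all add: y_def yh_def q_in)
  have a: "0 \<le> a" and e0: "0 \<le> e" and e: "e \<le> a" and e2: "e\<^sup>2 \<le> a\<^sup>2"
    using e_le by (simp_all add: e_def y_def yh_def order_trans[OF norm_ge_zero] power_mono)
  have "(\<eta> *\<^sub>R g) \<bullet> (P *v d - Jinv y *v d) \<le> norm (\<eta> *\<^sub>R g) * (G * e * n)"
    using norm_cauchy_schwarz[of "\<eta> *\<^sub>R g"] Jinv_lipschitz[OF yh y, of d]
    by (intro order_trans[OF norm_cauchy_schwarz] mult_left_mono)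
      (simp_all add: P_def e_def n_def norm_minus_commute)
  also have "\<dots> = (G * norm (\<eta> *\<^sub>R g) * e) * n" by (simp add: mult_ac)
  also have "\<dots> \<le> a * a * n"
    using mult_mono[OF g_le e a e0] by (intro mult_right_mono) (simp_all add: n_def)
  finally have 1: "(\<eta> *\<^sub>R g) \<bullet> (P *v d - Jinv y *v d) \<le> a * a * n" .
  have "w \<bullet> qinv_remainder yh y1 \<le> norm w * (G * n\<^sup>2)"
    using qinv_remainder_le[OF yh y1]
    by (intro order_trans[OF norm_cauchy_schwarz] mult_left_mono) (simp_all add: n_def d_def)
  also have "\<dots> = (G * norm w) * n\<^sup>2" by (simp add: mult_ac)
  also have "\<dots> \<le> a * n\<^sup>2"
    using w_le by (intro mult_right_mono) (simp_all add: w_def)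
  finally have 2: "w \<bullet> qinv_remainder yh y1 \<le> a * n\<^sup>2" .
  have "- (qinv_remainder yh y \<bullet> (P *v d)) \<le> (G * e\<^sup>2) * (G * n)"
    using norm_cauchy_schwarz[of "- qinv_remainder yh y" "P *v d"]
      mult_mono[OF qinv_remainder_le[OF yh y] Jinv_bound[OF yh, of d]] G_nonneg
    by (simp add: P_def e_def n_def)
  also have "\<dots> = (G\<^sup>2 * n) * e\<^sup>2" by (simp add: power2_eq_square mult_ac)
  also have "\<dots> \<le> (G\<^sup>2 * n) * a\<^sup>2"
    using e2 by (intro mult_left_mono) (simp_all add: n_def)
  also have "\<dots> = G\<^sup>2 * a\<^sup>2 * n" by (simp add: mult_ac)
  finally have 3: "- (qinv_remainder yh y \<bullet> (P *v d)) \<le> G\<^sup>2 * a\<^sup>2 * n" .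
  have "gR_remainder yh y \<bullet> d \<le> (G * n) * e\<^sup>2"
    using gR_remainder_inner_le[OF yh y, of d] by (simp add: n_def e_def mult_ac)
  also have "\<dots> \<le> (G * n) * a\<^sup>2"
    using e2 G_nonneg by (intro mult_left_mono) (simp_all add: n_def)
  also have "\<dots> = G * a\<^sup>2 * n" by (simp add: mult_ac)
  finally have 4: "gR_remainder yh y \<bullet> d \<le> G * a\<^sup>2 * n" .
  have "(\<eta> *\<^sub>R (matrix_inv (transpose (J x)) *v g) + gR yh - gR y) \<bullet> (yh - y1)
      \<le> (\<eta> *\<^sub>R g) \<bullet> (P *v d - Jinv y *v d) + w \<bullet> qinv_remainder yh y1
        - qinv_remainder yh y \<bullet> (P *v d) + gR_remainder yh y \<bullet> d"
    using stationarity_defect_decomposition[OF x x' y1 opt]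
    by (simp add: y_def yh_def P_def d_def w_def)
  also have "\<dots> \<le> a * a * n + a * n\<^sup>2 + G\<^sup>2 * a\<^sup>2 * n + G * a\<^sup>2 * n"
    using 1 2 3 4 by linarith
  also have "\<dots> = a * n\<^sup>2 + (1 + G + G\<^sup>2) * a\<^sup>2 * n"
    by (simp add: power2_eq_square algebra_simps)
  finally show ?thesis by (simp add: y_def yh_def d_def n_def)
qed

end

lemma quadratic_self_bound:
  fixes n a G :: real
  assumes n: "0 \<le> n" and a: "0 \<le> a" and G: "1 \<le> G"
    and quad: "n\<^sup>2 \<le> a * n\<^sup>2 + (1 + G + G\<^sup>2) * a\<^sup>2 * n" and lin: "n \<le> 2 * a"
  shows "n \<le> 5 * G ^ 3 * a\<^sup>2"
proof -
  have "G ^ 0 \<le> G ^ 3" "G ^ 1 \<le> G ^ 3" "G ^ 2 \<le> G ^ 3"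
    using G by (intro power_increasing; simp)+
  then have G3: "1 + G + G\<^sup>2 \<le> 3 * G ^ 3" "1 \<le> G ^ 3" by simp_all
  show ?thesis
  proof (cases "a < 2 / 5")
    case True
    have "n * (n * (1 - a)) \<le> n * ((1 + G + G\<^sup>2) * a\<^sup>2)"
      using quad by (simp add: power2_eq_square algebra_simps)
    then have "n * (1 - a) \<le> (1 + G + G\<^sup>2) * a\<^sup>2"
      using n G by (cases "n = 0") (auto simp: mult_le_cancel_left_pos)
    moreover have "n * (3 / 5) \<le> n * (1 - a)"
      using True n by (intro mult_left_mono) auto
    moreover have "(1 + G + G\<^sup>2) * a\<^sup>2 \<le> 3 * G ^ 3 * a\<^sup>2"
      using G3 by (intro mult_right_mono) auto
    ultimately show ?thesis by simp
  next
    case False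
    then have "2 * a \<le> (5 * a) * a" using a by (intro mult_right_mono) auto
    then have "n \<le> 5 * a\<^sup>2" using lin by (simp add: power2_eq_square)
    also have "\<dots> \<le> 5 * G ^ 3 * a\<^sup>2" using G3 by (intro mult_right_mono) auto
    finally show ?thesis .
  qed
qed

theorem propositionA1:
  fixes X Y :: "(real^'n) set"
    and q :: "real^'n \<Rightarrow> real^'n"
    and J :: "real^'n \<Rightarrow> real^'n^'n"
    and R :: "real^'n \<Rightarrow> real"
    and gR :: "real^'n \<Rightarrow> real^'n"
    and HR :: "real^'n \<Rightarrow> real^'n^'n"
    and TR :: "real^'n \<Rightarrow> real^'n \<Rightarrow> real^'n^'n"
    and Jinv :: "real^'n \<Rightarrow> real^'n^'n"
    and D2inv :: "real^'n \<Rightarrow> real^'n \<Rightarrow> real^'n^'n"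
    and G GF \<eta> :: real
    and xt yt x1 y1 g :: "real^'n"
  assumes X: "convex X" "compact X"
    and Y: "convex Y" "compact Y"
    \<comment> \<open>q : X \<rightarrow> Y smooth bijection with Jacobian J\<close>
    and q_bij: "bij_betw q X Y"
    and q_deriv: "\<And>x. x \<in> X \<Longrightarrow> (q has_derivative (\<lambda>h. J x *v h)) (at x within X)"
    and J_cont: "continuous_on X J"
    \<comment> \<open>(A1): R twice continuously differentiable, strictly convex, Hessian condition\<close>
    and R_grad: "\<And>y. y \<in> Y \<Longrightarrow> (R has_derivative (\<lambda>h. gR y \<bullet> h)) (at y within Y)"
    and R_hess: "\<And>y. y \<in> Y \<Longrightarrow> (gR has_derivative (\<lambda>h. HR y *v h)) (at y within Y)"
    and HR_cont: "continuous_on Y HR"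
    and R_strict: "strict_convex_on Y R"
    and A1: "\<And>x. x \<in> X \<Longrightarrow> invertible (HR (q x)) \<and>
                 matrix_inv (HR (q x)) = J x ** transpose (J x)"
    \<comment> \<open>(A2)\<close>
    and G_gt: "G > 1"
    and q_lip: "G-lipschitz_on X q"
    and qinv_d1: "\<And>y. y \<in> Y \<Longrightarrow> (inv_into X q has_derivative (\<lambda>h. Jinv y *v h)) (at y within Y)"
    and qinv_d1_bd: "\<And>y h. y \<in> Y \<Longrightarrow> norm (Jinv y *v h) \<le> G * norm h"
    and qinv_d2: "\<And>y. y \<in> Y \<Longrightarrow> (Jinv has_derivative D2inv y) (at y within Y)"
    and qinv_d2_bd: "\<And>y h k. y \<in> Y \<Longrightarrow> norm (D2inv y h *v k) \<le> G * norm h * norm k"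
    and R_strong: "strongly_convex_1_on Y R"
    and R_d1_bd: "\<And>y. y \<in> Y \<Longrightarrow> norm (gR y) \<le> G"
    and R_d3: "\<And>y. y \<in> Y \<Longrightarrow> (HR has_derivative TR y) (at y within Y)"
    and R_d3_bd: "\<And>y h k l. y \<in> Y \<Longrightarrow> \<bar>(TR y h *v k) \<bullet> l\<bar> \<le> G * norm h * norm k * norm l"
    and D_lip: "\<And>z. z \<in> Y \<Longrightarrow> G-lipschitz_on Y (\<lambda>w. bregman R gR z w)"
    \<comment> \<open>the step\<close>
    and eta: "\<eta> > 0"
    and xt: "xt \<in> X"
    and yt: "yt = q xt"
    and GF: "GF > 0"
    and g: "norm g \<le> GF"
    and y1: "y1 \<in> Y"
    and y1_min: "\<And>y. y \<in> Y \<Longrightarrow>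
        (matrix_inv (transpose (J xt)) *v g) \<bullet> (y1 - yt) + (1 / \<eta>) * bregman R gR y1 yt
        \<le> (matrix_inv (transpose (J xt)) *v g) \<bullet> (y - yt) + (1 / \<eta>) * bregman R gR y yt"
    and x1: "x1 \<in> X"
    and x1_min: "\<And>x. x \<in> X \<Longrightarrow>
        g \<bullet> (x1 - xt) + (1 / (2 * \<eta>)) * (norm (x1 - xt))\<^sup>2
        \<le> g \<bullet> (x - xt) + (1 / (2 * \<eta>)) * (norm (x - xt))\<^sup>2"
  shows "norm (y1 - q x1) \<le> G ^ 5 * (5 * GF\<^sup>2 + GF ^ 3 * \<eta>) * \<eta>\<^sup>2"
proof -
  interpret hessian_reparametrization X Y q J Jinv HR D2inv TR gR G
    using Y(1) q_bij q_deriv A1 G_gt qinv_d1 qinv_d1_bd qinv_d2 qinv_d2_bd R_hess R_d3 R_d3_bd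
    by unfold_locales auto
  define a where "a = G * (\<eta> * GF)"
  have g_le: "G * norm (\<eta> *\<^sub>R g) \<le> a"
    using eta g G_gt by (auto simp: a_def intro!: mult_left_mono)
  note step = projected_gradient_step[OF X(1) compact_imp_closed[OF X(2)] xt x1 eta x1_min]
  have w_le: "G * norm (\<eta> *\<^sub>R g + (x1 - xt)) \<le> a"
    using mult_left_mono[OF step(2), of G] g_le G_gt by linarith
  have "norm (q xt - q x1) \<le> G * norm (x1 - xt)"
    using lipschitz_onD[OF q_lip xt x1] by (simp add: dist_norm norm_minus_commute)
  also have "\<dots> \<le> G * norm (\<eta> *\<^sub>R g)"
    using step(3) G_gt by (intro mult_left_mono) auto
  finally have e_le: "norm (q xt - q x1) \<le> a"
    using g_le by linarith
  have mirror: "\<And>y. y \<in> Y \<Longrightarrow>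
      (norm (y1 - y))\<^sup>2 \<le> (\<eta> *\<^sub>R (matrix_inv (transpose (J xt)) *v g) + gR y - gR yt) \<bullet> (y - y1)"
    using bregman_proximal_step_le[OF Y(1) R_strong R_grad eta y1 y1_min] .
  have "(norm (y1 - q xt))\<^sup>2 \<le> (\<eta> *\<^sub>R (matrix_inv (transpose (J xt)) *v g)) \<bullet> (q xt - y1)"
    using mirror[OF q_in[OF xt]] yt by simp
  then have "norm (y1 - q xt) \<le> a"
    using mirror_step_norm_le[OF xt y1] g_le by (meson order_trans)
  then have lin: "norm (y1 - q x1) \<le> 2 * a"
    using norm_diff_triangle_le[OF _ e_le] by fastforce
  have quad: "(norm (y1 - q x1))\<^sup>2 \<le> a * (norm (y1 - q x1))\<^sup>2 + (1 + G + G\<^sup>2) * a\<^sup>2 * norm (y1 - q x1)"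
    using mirror[OF q_in[OF x1]] stationarity_defect_le[OF xt x1 y1 step(1) w_le g_le e_le] yt
    by simp
  have "norm (y1 - q x1) \<le> 5 * G ^ 3 * a\<^sup>2"
    using quadratic_self_bound[OF norm_ge_zero _ _ quad lin] e_le G_gt
    by (simp add: order_trans[OF norm_ge_zero])
  also have "\<dots> \<le> 5 * G ^ 3 * a\<^sup>2 + G\<^sup>2 * a ^ 3"
    using e_le by (simp add: order_trans[OF norm_ge_zero])
  also have "\<dots> = G ^ 5 * (5 * GF\<^sup>2 + GF ^ 3 * \<eta>) * \<eta>\<^sup>2"
    by (simp add: a_def algebra_simps power2_eq_square eval_nat_numeral)
  finally show ?thesis .
qed

end
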